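(* Let $p>3$ be a prime and $X=\mathbb{Z}(p)$. Then there exist independent random variables $\xi_1,\xi_2,\xi_3,\xi_4$ with values in $X$ and distributions $\mu_1,\mu_2,\mu_3,\mu_4$ such that the conditional distribution of $L_2=\xi_1+\xi_2+2\xi_3+2\xi_4$ given $L_1=\xi_1+\xi_2+\xi_3+\xi_4$ is symmetric and $\mu_1,\mu_2,\mu_3,\mu_4\notin I(X)$.
   Context: $\mathbb{Z}(p)$ is the cyclic group of order $p$. $I(X)$ is the set of shifts of Haar distributions $m_K$ of subgroups $K$ of $X$. For random variables $L_1,L_2$ with values in $X$, the conditional distribution of $L_2$ given $L_1$ is called symmetric if the pairs $(L_1,L_2)$ and $(L_1,-L_2)$ are identically distributed. *)

theory Defs
  imports "HOL-Probability.Probability"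
begin

text \<open>The cyclic group Z(p) is represented by the residues {0..<p} :: int set,
  with group operation addition modulo p.\<close>

definition Zp :: "int \<Rightarrow> int set" where
  "Zp p = {0..<p}"

definition zp_subgroup :: "int \<Rightarrow> int set \<Rightarrow> bool" where
  "zp_subgroup p K \<longleftrightarrow> K \<subseteq> Zp p \<and> 0 \<in> K \<and>
     (\<forall>a\<in>K. \<forall>b\<in>K. (a + b) mod p \<in> K) \<and> (\<forall>a\<in>K. (- a) mod p \<in> K)"

text \<open>I(X): shifts of Haar (uniform) distributions m_K of subgroups K of X = Z(p).\<close>
definition I_Zp :: "int \<Rightarrow> int pmf set" where
  "I_Zp p = {pmf_of_set ((\<lambda>k. (x + k) mod p) ` K) | x K. x \<in> Zp p \<and> zp_subgroup p K}"

end

theory Submission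
  imports Defs
begin

text \<open>Let \<mu>1 = \<mu>3 and \<mu>2 = \<mu>4 have the densities (1 + cos (2\<pi>x/p))/p and
  (1 + cos (4\<pi>x/p))/p on Z(p). Their Fourier transforms are supported on {0, \<plusminus>1} and {0, \<plusminus>2},
  which meet only in 0 since p > 3, so \<mu>1 * \<mu>2 is the Haar measure of Z(p). Hence
  A = \<xi>1 + \<xi>2 and B = \<xi>3 + \<xi>4 are independent and uniform, and so is
  (L1, L2) = (A + B, A + 2B), an invertible linear image of (A, B); the uniform distribution
  on Z(p) \<times> Z(p) is invariant under (x, y) \<mapsto> (x, -y). No \<mu>i lies in I(X): its mass at 0 is 2/p,
  whereas a shifted Haar measure of a subgroup K only takes the values 0 and 1/|K|, and p is odd.\<close>

definition char_re :: "int \<Rightarrow> int \<Rightarrow> real" where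
  "char_re p n = cos (2 * pi * of_int n / of_int p)"

lemma char_re_cong:
  fixes p u v :: int
  assumes "u mod p = v mod p"
  shows "char_re p u = char_re p v"
proof -
  obtain t where t: "u = v + p * t"
    using assms by (metis mod_eq_dvd_iff dvd_def add.commute diff_add_cancel)
  show ?thesis
  proof (cases "p = 0")
    case False
    then have "2 * pi * of_int u / of_int p = 2 * pi * of_int v / of_int p + 2 * pi * of_int t"
      by (simp add: t field_simps)
    then show ?thesis
      unfolding char_re_def by (simp only: cos_add cos_int_2pin sin_int_2pin)
  qed (simp add: t)
qed

lemma char_re_mult:
  "char_re p u * char_re p v = (char_re p (u - v) + char_re p (u + v)) / 2"
  by (simp add: char_re_def cos_times_cos diff_divide_distrib add_divide_distrib algebra_simps)

lemma sum_cis_linear_eq_0: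
  fixes n :: nat and k m :: int
  assumes n: "n > 0" and nd: "\<not> int n dvd k"
  shows "(\<Sum>x<n. cis (2 * pi * of_int (k * int x + m) / n)) = 0"
proof -
  define \<omega> where "\<omega> = cis (2 * pi * k / n)"
  have "\<omega> \<noteq> 1"
  proof
    assume "\<omega> = 1"
    then have "cos (2 * pi * k / n) = 1" by (simp add: \<omega>_def complex_eq_iff)
    then obtain j :: int where "2 * pi * k / n = j * 2 * pi" by (auto simp: cos_one_2pi_int)
    then have "real_of_int k = real_of_int (j * int n)" using n by (simp add: field_simps)
    then show False using nd by (simp only: of_int_eq_iff) simp
  qed
  moreover have "\<omega> ^ n = 1"
  proof -
    have "\<omega> ^ n = cis (real n * (2 * pi * k / n))" unfolding \<omega>_def by (rule Complex.DeMoivre)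
    also have "\<dots> = cis (2 * pi * k)" using n by simp
    finally show ?thesis by (simp add: cis_multiple_2pi)
  qed
  moreover have "(\<Sum>x<n. cis (2 * pi * of_int (k * int x + m) / n)) = cis (2 * pi * m / n) * (\<Sum>x<n. \<omega> ^ x)"
    unfolding sum_distrib_left
    by (intro sum.cong refl) (simp add: \<omega>_def Complex.DeMoivre cis_mult field_simps)
  ultimately show ?thesis by (simp add: geometric_sum)
qed

lemma sum_char_re_linear_eq_0:
  fixes p k m :: int
  assumes "p > 0" and "\<not> p dvd k"
  shows "(\<Sum>x\<in>{0..<p}. char_re p (k * x + m)) = 0"
proof -
  obtain n where n: "p = int n" "n > 0" using assms(1) by (metis pos_int_cases)
  have "(\<Sum>x\<in>{0..<p}. char_re p (k * x + m)) = (\<Sum>x<n. char_re p (k * int x + m))"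
  proof -
    have "{0..<p} = int ` {..<n}" using n image_int_atLeastLessThan[of 0 n] by (simp add: atLeast0LessThan)
    then show ?thesis by (simp add: sum.reindex)
  qed
  also have "\<dots> = Re (\<Sum>x<n. cis (2 * pi * of_int (k * int x + m) / n))"
    using n by (simp add: Re_sum char_re_def)
  also have "\<dots> = 0" using sum_cis_linear_eq_0 n assms(2) by simp
  finally show ?thesis .
qed

definition cos_density :: "int \<Rightarrow> int \<Rightarrow> int \<Rightarrow> real" where
  "cos_density p j x = (if x \<in> Zp p then (1 + char_re p (j * x)) / p else 0)"

definition cos_pmf :: "int \<Rightarrow> int \<Rightarrow> int pmf" where
  "cos_pmf p j = embed_pmf (cos_density p j)"

lemma cos_density_nonneg: "p > 0 \<Longrightarrow> cos_density p j x \<ge> 0"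
  unfolding cos_density_def char_re_def by (smt (verit) cos_ge_minus_one divide_nonneg_pos of_int_pos)

lemma sum_cos_density:
  assumes "p > 0" and "\<not> p dvd j"
  shows "(\<Sum>x\<in>Zp p. cos_density p j x) = 1"
proof -
  have "(\<Sum>x\<in>Zp p. cos_density p j x) = (\<Sum>x\<in>{0..<p}. 1 / p + char_re p (j * x + 0) / p)"
    by (intro sum.cong) (auto simp: cos_density_def Zp_def add_divide_distrib)
  also have "\<dots> = real (nat p) / p + (\<Sum>x\<in>{0..<p}. char_re p (j * x + 0)) / p"
    by (simp add: sum.distrib sum_divide_distrib)
  also have "\<dots> = 1"
    using assms sum_char_re_linear_eq_0[OF assms, of 0] by simp
  finally show ?thesis .
qed

lemma pmf_cos_pmf:
  assumes "p > 0" and "\<not> p dvd j"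
  shows "pmf (cos_pmf p j) x = cos_density p j x"
  unfolding cos_pmf_def
proof (rule pmf_embed_pmf)
  show "0 \<le> cos_density p j x" for x using assms(1) by (rule cos_density_nonneg)
  have "(\<integral>\<^sup>+x. ennreal (cos_density p j x) \<partial>count_space UNIV) =
      (\<Sum>x\<in>Zp p. ennreal (cos_density p j x))"
    by (rule nn_integral_count_space') (auto simp: Zp_def cos_density_def)
  also have "\<dots> = ennreal (\<Sum>x\<in>Zp p. cos_density p j x)"
    using cos_density_nonneg assms by (intro sum_ennreal) auto
  finally show "(\<integral>\<^sup>+x. ennreal (cos_density p j x) \<partial>count_space UNIV) = 1"
    using sum_cos_density[OF assms] by simp
qed

lemma set_pmf_cos_pmf:
  assumes "p > 0" and "\<not> p dvd j"
  shows "set_pmf (cos_pmf p j) \<subseteq> Zp p"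
  using pmf_cos_pmf[OF assms] by (auto simp: set_pmf_iff cos_density_def split: if_splits)

lemma pmf_of_set_neq_two_div_odd:
  fixes p :: int
  assumes "finite S" "S \<noteq> {}" "odd p"
  shows "pmf (pmf_of_set S) x \<noteq> 2 / p"
proof
  assume *: "pmf (pmf_of_set S) x = 2 / p"
  with assms have "x \<in> S" by (cases "x \<in> S") auto
  with * assms have "real_of_int p = real_of_int (2 * int (card S))"
    by (auto simp: field_simps)
  then have "p = 2 * int (card S)" by (simp only: of_int_eq_iff)
  with assms(3) show False by simp
qed

lemma cos_pmf_notin_I_Zp:
  assumes "p > 0" "odd p" and "\<not> p dvd j"
  shows "cos_pmf p j \<notin> I_Zp p"
proof
  assume "cos_pmf p j \<in> I_Zp p"
  then obtain x K where eq: "cos_pmf p j = pmf_of_set ((\<lambda>k. (x + k) mod p) ` K)"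
    and K: "zp_subgroup p K"
    unfolding I_Zp_def by blast
  from K have "finite K" "K \<noteq> {}"
    unfolding zp_subgroup_def Zp_def by (auto intro: finite_subset)
  then have "pmf (cos_pmf p j) 0 \<noteq> 2 / p"
    unfolding eq by (intro pmf_of_set_neq_two_div_odd \<open>odd p\<close>) auto
  moreover have "pmf (cos_pmf p j) 0 = 2 / p"
    using assms by (simp add: pmf_cos_pmf cos_density_def char_re_def Zp_def)
  ultimately show False by contradiction
qed

lemma add_mod_eq_iff:
  fixes p a b c :: int
  assumes "b \<in> Zp p" "c \<in> Zp p"
  shows "(a + b) mod p = c \<longleftrightarrow> b = (c - a) mod p"
proof
  assume "(a + b) mod p = c"
  then have "(c - a) mod p = (a + b - a) mod p" by (metis mod_diff_left_eq)
  with assms(1) show "b = (c - a) mod p" by (simp add: Zp_def)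
next
  assume "b = (c - a) mod p"
  then have "(a + b) mod p = (a + (c - a)) mod p" by (simp add: mod_add_right_eq)
  with assms(2) show "(a + b) mod p = c" by (simp add: Zp_def)
qed

lemma pmf_map_add_mod_pair_pmf:
  fixes M N :: "int pmf"
  assumes "set_pmf M \<subseteq> Zp p" "set_pmf N \<subseteq> Zp p" "c \<in> Zp p"
  shows "pmf (map_pmf (\<lambda>(a, b). (a + b) mod p) (pair_pmf M N)) c =
    (\<Sum>a\<in>Zp p. pmf M a * pmf N ((c - a) mod p))"
proof -
  let ?P = "pair_pmf M N" and ?f = "\<lambda>(a, b). (a + b) mod p"
  define T where "T = (\<lambda>a. (a, (c - a) mod p)) ` Zp p"
  have "set_pmf ?P \<subseteq> Zp p \<times> Zp p"
    using assms(1,2) by auto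
  moreover have "?f (a, b) = c \<longleftrightarrow> (a, b) \<in> T" if "a \<in> Zp p" "b \<in> Zp p" for a b
    using that add_mod_eq_iff[OF that(2) assms(3)] by (auto simp: T_def)
  ultimately have preimage: "?f -` {c} \<inter> set_pmf ?P = T \<inter> set_pmf ?P"
    by auto
  have "pmf (map_pmf ?f ?P) c = measure ?P (?f -` {c} \<inter> set_pmf ?P)"
    unfolding pmf_map by (rule measure_Int_set_pmf[symmetric])
  also have "\<dots> = measure ?P T"
    unfolding preimage by (rule measure_Int_set_pmf)
  also have "\<dots> = (\<Sum>ab\<in>T. pmf ?P ab)"
    by (rule measure_measure_pmf_finite) (simp add: T_def Zp_def)
  also have "\<dots> = (\<Sum>a\<in>Zp p. pmf M a * pmf N ((c - a) mod p))"
    unfolding T_def by (subst sum.reindex) (auto intro: inj_onI simp: pmf_pair)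
  finally show ?thesis .
qed

(* Every cosine is written with an argument of the shape \<kappa> * a + m, as required by
   sum_char_re_linear_eq_0. *)
lemma cos_density_mult_expand:
  assumes "p > 0" "a \<in> Zp p"
  shows "cos_density p j a * cos_density p k ((c - a) mod p) =
    (1 + char_re p (j * a + 0) + char_re p ((- k) * a + k * c)
      + (char_re p ((j + k) * a + - (k * c)) + char_re p ((j - k) * a + k * c)) / 2) / of_int p ^ 2"
proof -
  let ?w = "char_re p"
  have dj: "cos_density p j a = (1 + ?w (j * a + 0)) / p"
    using assms(2) by (simp add: cos_density_def)
  have "?w (k * ((c - a) mod p)) = ?w ((- k) * a + k * c)"
    by (rule char_re_cong) (simp add: mod_mult_right_eq algebra_simps)
  moreover have "(c - a) mod p \<in> Zp p" using assms(1) by (simp add: Zp_def)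
  ultimately have dk: "cos_density p k ((c - a) mod p) = (1 + ?w ((- k) * a + k * c)) / p"
    unfolding cos_density_def by simp
  have prod: "?w (j * a + 0) * ?w ((- k) * a + k * c)
      = (?w ((j + k) * a + - (k * c)) + ?w ((j - k) * a + k * c)) / 2"
    by (subst char_re_mult) (simp add: algebra_simps)
  have expand: "(1 + x) / q * ((1 + y) / q) = (1 + x + y + x * y) / q ^ 2" for x y q :: real
    by (simp add: power2_eq_square algebra_simps)
  show ?thesis
    unfolding dj dk expand prod ..
qed

lemma cos_density_convolution:
  assumes "p > 0" and "\<not> p dvd j" "\<not> p dvd k" "\<not> p dvd (j + k)" "\<not> p dvd (j - k)"
  shows "(\<Sum>a\<in>Zp p. cos_density p j a * cos_density p k ((c - a) mod p)) = 1 / p"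
proof -
  let ?w = "char_re p"
  have "(\<Sum>a\<in>Zp p. cos_density p j a * cos_density p k ((c - a) mod p)) =
      (\<Sum>a\<in>{0..<p}. (1 + ?w (j * a + 0) + ?w ((- k) * a + k * c)
        + (?w ((j + k) * a + - (k * c)) + ?w ((j - k) * a + k * c)) / 2) / of_int p ^ 2)"
    using assms(1) by (intro sum.cong) (auto simp: Zp_def cos_density_mult_expand)
  also have "\<dots> = (real (nat p) + (\<Sum>a\<in>{0..<p}. ?w (j * a + 0)) + (\<Sum>a\<in>{0..<p}. ?w ((- k) * a + k * c))
      + ((\<Sum>a\<in>{0..<p}. ?w ((j + k) * a + - (k * c))) + (\<Sum>a\<in>{0..<p}. ?w ((j - k) * a + k * c))) / 2)
      / of_int p ^ 2"
    by (simp only: sum_divide_distrib[symmetric] sum.distrib sum_constant) simp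
  also have "\<dots> = 1 / p"
  proof -
    have "(\<Sum>a\<in>{0..<p}. ?w (j * a + 0)) = 0" "(\<Sum>a\<in>{0..<p}. ?w ((- k) * a + k * c)) = 0"
      "(\<Sum>a\<in>{0..<p}. ?w ((j + k) * a + - (k * c))) = 0" "(\<Sum>a\<in>{0..<p}. ?w ((j - k) * a + k * c)) = 0"
      by (rule sum_char_re_linear_eq_0; use assms in simp)+
    then show ?thesis using assms(1) by (simp add: power2_eq_square)
  qed
  finally show ?thesis .
qed

lemma cos_pmf_add_mod_uniform:
  assumes "p > 0" and "\<not> p dvd j" "\<not> p dvd k" "\<not> p dvd (j + k)" "\<not> p dvd (j - k)"
  shows "map_pmf (\<lambda>(a, b). (a + b) mod p) (pair_pmf (cos_pmf p j) (cos_pmf p k)) = pmf_of_set (Zp p)"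
proof (rule pmf_eqI)
  fix c
  let ?S = "map_pmf (\<lambda>(a, b). (a + b) mod p) (pair_pmf (cos_pmf p j) (cos_pmf p k))"
  have Zp: "finite (Zp p)" "Zp p \<noteq> {}" "card (Zp p) = nat p" using assms(1) by (auto simp: Zp_def)
  show "pmf ?S c = pmf (pmf_of_set (Zp p)) c"
  proof (cases "c \<in> Zp p")
    case False
    then have "c \<notin> set_pmf ?S" using assms(1) by (auto simp: Zp_def)
    then have "pmf ?S c = 0" by (meson set_pmf_iff)
    with False show ?thesis using Zp by simp
  next
    case True
    then have "pmf ?S c = 1 / p"
      using assms by (simp add: pmf_map_add_mod_pair_pmf set_pmf_cos_pmf pmf_cos_pmf cos_density_convolution)
    then show ?thesis using True Zp assms(1) by simp
  qed
qed

lemma pair_pmf_of_set: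
  assumes "finite A" "A \<noteq> {}" "finite B" "B \<noteq> {}"
  shows "pair_pmf (pmf_of_set A) (pmf_of_set B) = pmf_of_set (A \<times> B)"
proof (rule pmf_eqI)
  fix x :: "'a \<times> 'b"
  show "pmf (pair_pmf (pmf_of_set A) (pmf_of_set B)) x = pmf (pmf_of_set (A \<times> B)) x"
    using assms by (cases x) (simp add: pmf_pair card_cartesian_product indicator_def)
qed

lemma Pi_pmf_four:
  "map_pmf (\<lambda>\<omega>. (\<omega> 1, \<omega> 2, \<omega> 3, \<omega> 4)) (Pi_pmf {1..4::nat} d \<mu>) =
   pair_pmf (\<mu> 1) (pair_pmf (\<mu> 2) (pair_pmf (\<mu> 3) (\<mu> 4)))"
proof -
  have "{1..4::nat} = {1, 2, 3, 4}" by auto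
  then show ?thesis
    by (simp add: Pi_pmf_insert pmf.map_comp o_def pair_map_pmf2 pair_return_pmf2 case_prod_beta
        apsnd_def map_prod_def cong: map_pmf_cong)
qed

lemma map_pmf_Pi_pmf_four_pairs:
  "map_pmf (\<lambda>\<omega>. (f (\<omega> 1, \<omega> 2), g (\<omega> 3, \<omega> 4))) (Pi_pmf {1..4::nat} d \<mu>) =
   pair_pmf (map_pmf f (pair_pmf (\<mu> 1) (\<mu> 2))) (map_pmf g (pair_pmf (\<mu> 3) (\<mu> 4)))"
proof -
  have "map_pmf (\<lambda>\<omega>. (f (\<omega> 1, \<omega> 2), g (\<omega> 3, \<omega> 4))) (Pi_pmf {1..4::nat} d \<mu>) =
      map_pmf (\<lambda>(a, b, c, e). (f (a, b), g (c, e)))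
        (map_pmf (\<lambda>\<omega>. (\<omega> 1, \<omega> 2, \<omega> 3, \<omega> 4)) (Pi_pmf {1..4::nat} d \<mu>))"
    by (simp add: pmf.map_comp o_def)
  also have "\<dots> = map_pmf (\<lambda>(a, b, c, e). (f (a, b), g (c, e)))
      (pair_pmf (\<mu> 1) (pair_pmf (\<mu> 2) (pair_pmf (\<mu> 3) (\<mu> 4))))"
    by (simp only: Pi_pmf_four)
  also have "\<dots> = map_pmf (\<lambda>(x, y). (f x, g y))
      (pair_pmf (pair_pmf (\<mu> 1) (\<mu> 2)) (pair_pmf (\<mu> 3) (\<mu> 4)))"
    unfolding pair_pair_pmf by (auto simp: pmf.map_comp o_def intro!: map_pmf_cong)
  finally show ?thesis by (simp add: map_pair)
qed

lemma mod_add_mult_right_eq: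
  fixes a b v c :: int
  shows "(a + v * (b mod c)) mod c = (a + v * b) mod c"
  by (metis mod_add_right_eq mod_mult_right_eq)

lemma bij_betw_neg_mod:
  assumes "p > 0"
  shows "bij_betw (\<lambda>(x, y). (x, (- y) mod p)) (Zp p \<times> Zp p) (Zp p \<times> Zp p)"
  by (rule bij_betw_byWitness[where f' = "\<lambda>(x, y). (x, (- y) mod p)"])
    (use assms in \<open>auto simp: Zp_def mod_minus_eq\<close>)

lemma bij_betw_shear_fst_mod:
  assumes "p > 0"
  shows "bij_betw (\<lambda>(a, b). ((a + b) mod p, b)) (Zp p \<times> Zp p) (Zp p \<times> Zp p)"
  by (rule bij_betw_byWitness[where f' = "\<lambda>(x, b). ((x - b) mod p, b)"])
    (use assms in \<open>auto simp: Zp_def mod_simps\<close>)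

lemma bij_betw_shear_snd_mod:
  assumes "p > 0"
  shows "bij_betw (\<lambda>(a, b). (a, (a + b) mod p)) (Zp p \<times> Zp p) (Zp p \<times> Zp p)"
  by (rule bij_betw_byWitness[where f' = "\<lambda>(a, y). (a, (y - a) mod p)"])
    (use assms in \<open>auto simp: Zp_def mod_simps\<close>)

lemma bij_betw_add_mod_add_double_mod:
  assumes "p > 0"
  shows "bij_betw (\<lambda>(a, b). ((a + b) mod p, (a + 2 * b) mod p)) (Zp p \<times> Zp p) (Zp p \<times> Zp p)"
proof -
  have "(\<lambda>(a, b). ((a + b) mod p, (a + 2 * b) mod p)) =
      (\<lambda>(a, b). (a, (a + b) mod p)) \<circ> (\<lambda>(a, b). ((a + b) mod p, b))"
    by (auto simp: mod_simps algebra_simps)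
  then show ?thesis
    using bij_betw_trans[OF bij_betw_shear_fst_mod bij_betw_shear_snd_mod] assms by simp
qed

lemma indep_vars_Pi_pmf_mod:
  assumes "finite I"
  shows "prob_space.indep_vars (measure_pmf (Pi_pmf I d \<mu>)) (\<lambda>_. count_space UNIV)
    (\<lambda>i \<omega>. \<omega> i mod p) I"
  using prob_space.indep_vars_compose2[OF measure_pmf.prob_space_axioms indep_vars_Pi_pmf[OF assms],
      where Y = "\<lambda>_ y. y mod p"]
  by simp

lemma distr_Pi_pmf_mod:
  assumes "finite I" "i \<in> I" "set_pmf (\<mu> i) \<subseteq> Zp p"
  shows "distr (Pi_pmf I d \<mu>) (count_space UNIV) (\<lambda>\<omega>. \<omega> i mod p) = \<mu> i"
proof -
  have "map_pmf (\<lambda>\<omega>. \<omega> i mod p) (Pi_pmf I d \<mu>) =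
      map_pmf (\<lambda>x. x mod p) (map_pmf (\<lambda>\<omega>. \<omega> i) (Pi_pmf I d \<mu>))"
    by (simp add: pmf.map_comp o_def)
  also have "\<dots> = \<mu> i"
    using assms by (auto simp: Pi_pmf_component Zp_def intro!: map_pmf_idI)
  finally show ?thesis by (simp add: map_pmf_rep_eq[symmetric])
qed

lemma map_pmf_Pi_pmf_four_linear_forms_uniform:
  fixes \<mu> :: "nat \<Rightarrow> int pmf"
  assumes "p > 0"
    and "map_pmf (\<lambda>(a, b). (a + b) mod p) (pair_pmf (\<mu> 1) (\<mu> 2)) = pmf_of_set (Zp p)"
    and "map_pmf (\<lambda>(a, b). (a + b) mod p) (pair_pmf (\<mu> 3) (\<mu> 4)) = pmf_of_set (Zp p)"
  shows "map_pmf (\<lambda>\<omega>. ((\<omega> 1 mod p + \<omega> 2 mod p + \<omega> 3 mod p + \<omega> 4 mod p) mod p,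
      (\<omega> 1 mod p + \<omega> 2 mod p + 2 * (\<omega> 3 mod p) + 2 * (\<omega> 4 mod p)) mod p)) (Pi_pmf {1..4} d \<mu>) =
    pmf_of_set (Zp p \<times> Zp p)"
    (is "map_pmf ?L _ = ?U")
proof -
  let ?S = "\<lambda>\<omega>. ((\<omega> 1 + \<omega> 2) mod p, (\<omega> 3 + \<omega> 4) mod p)"
  let ?lin = "\<lambda>(a, b). ((a + b) mod p, (a + 2 * b) mod p)"
  have Zp: "finite (Zp p)" "Zp p \<noteq> {}" using assms(1) by (auto simp: Zp_def)
  have lin: "((x1 + x2 + x3 + x4) mod p, (x1 + x2 + 2 * x3 + 2 * x4) mod p) =
      ?lin ((x1 + x2) mod p, (x3 + x4) mod p)"
    for x1 x2 x3 x4 :: int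
    by (simp add: mod_simps mod_add_mult_right_eq, simp add: algebra_simps)
  have "?L = ?lin \<circ> ?S"
  proof
    fix \<omega> :: "nat \<Rightarrow> int"
    have "?L \<omega> = ?lin ((\<omega> 1 mod p + \<omega> 2 mod p) mod p, (\<omega> 3 mod p + \<omega> 4 mod p) mod p)"
      by (rule lin)
    then show "?L \<omega> = (?lin \<circ> ?S) \<omega>"
      by (simp only: mod_add_eq comp_def)
  qed
  then have "map_pmf ?L (Pi_pmf {1..4} d \<mu>) = map_pmf ?lin (map_pmf ?S (Pi_pmf {1..4} d \<mu>))"
    by (simp add: pmf.map_comp)
  also have "map_pmf ?S (Pi_pmf {1..4} d \<mu>) =
      pair_pmf (map_pmf (\<lambda>(a, b). (a + b) mod p) (pair_pmf (\<mu> 1) (\<mu> 2)))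
        (map_pmf (\<lambda>(a, b). (a + b) mod p) (pair_pmf (\<mu> 3) (\<mu> 4)))"
    using map_pmf_Pi_pmf_four_pairs[where f = "\<lambda>(a, b). (a + b) mod p" and g = "\<lambda>(a, b). (a + b) mod p"]
    by simp
  also have "\<dots> = ?U"
    unfolding assms(2,3) by (rule pair_pmf_of_set) (use Zp in auto)
  also have "map_pmf ?lin ?U = ?U"
    using Zp by (intro map_pmf_of_set_bij_betw bij_betw_add_mod_add_double_mod assms(1)) auto
  finally show ?thesis .
qed

lemma distr_neg_snd_mod_eq_if_uniform:
  assumes "p > 0" and "map_pmf (\<lambda>\<omega>. (X \<omega>, Y \<omega>)) M = pmf_of_set (Zp p \<times> Zp p)"
  shows "distr M (count_space UNIV) (\<lambda>\<omega>. (X \<omega>, Y \<omega>)) =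
    distr M (count_space UNIV) (\<lambda>\<omega>. (X \<omega>, (- Y \<omega>) mod p))"
proof -
  have "Zp p \<times> Zp p \<noteq> {}" "finite (Zp p \<times> Zp p)" using assms(1) by (auto simp: Zp_def)
  then have "map_pmf (\<lambda>(x, y). (x, (- y) mod p)) (map_pmf (\<lambda>\<omega>. (X \<omega>, Y \<omega>)) M) =
      map_pmf (\<lambda>\<omega>. (X \<omega>, Y \<omega>)) M"
    unfolding assms(2) by (intro map_pmf_of_set_bij_betw bij_betw_neg_mod assms(1))
  then show ?thesis
    by (simp add: map_pmf_rep_eq[symmetric] pmf.map_comp o_def)
qed

theorem lemma6:
  fixes p :: int
  assumes "prime p" and "p > 3"
  shows "\<exists>(M :: (nat \<Rightarrow> int) measure) (\<xi> :: nat \<Rightarrow> (nat \<Rightarrow> int) \<Rightarrow> int) (\<mu> :: nat \<Rightarrow> int pmf).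
     prob_space M \<and>
     (\<forall>i\<in>{1..4}. \<xi> i \<in> measurable M (count_space UNIV)) \<and>
     (\<forall>i\<in>{1..4}. \<forall>\<omega>\<in>space M. \<xi> i \<omega> \<in> Zp p) \<and>
     prob_space.indep_vars M (\<lambda>_. count_space UNIV) \<xi> {1..4} \<and>
     (\<forall>i\<in>{1..4}. distr M (count_space UNIV) (\<xi> i) = measure_pmf (\<mu> i)) \<and>
     (let L1 = (\<lambda>\<omega>. (\<xi> 1 \<omega> + \<xi> 2 \<omega> + \<xi> 3 \<omega> + \<xi> 4 \<omega>) mod p);
          L2 = (\<lambda>\<omega>. (\<xi> 1 \<omega> + \<xi> 2 \<omega> + 2 * \<xi> 3 \<omega> + 2 * \<xi> 4 \<omega>) mod p)
      in distr M (count_space UNIV) (\<lambda>\<omega>. (L1 \<omega>, L2 \<omega>)) =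
         distr M (count_space UNIV) (\<lambda>\<omega>. (L1 \<omega>, (- L2 \<omega>) mod p))) \<and>
     (\<forall>i\<in>{1..4}. \<mu> i \<notin> I_Zp p)"
proof -
  have p: "p > 0" "odd p" and ndvd: "\<not> p dvd 1" "\<not> p dvd 2" "\<not> p dvd 3"
    using assms prime_odd_int zdvd_imp_le[of p 1] zdvd_imp_le[of p 2] zdvd_imp_le[of p 3] by auto
  define \<mu> where "\<mu> i = cos_pmf p (if odd i then 1 else 2)" for i :: nat
  define P where "P = Pi_pmf {1..4::nat} 0 \<mu>"
  have "map_pmf (\<lambda>(a, b). (a + b) mod p) (pair_pmf (cos_pmf p 1) (cos_pmf p 2)) = pmf_of_set (Zp p)"
    using p ndvd by (intro cos_pmf_add_mod_uniform) auto
  then have "distr P (count_space UNIV) (\<lambda>\<omega>. ((\<omega> 1 mod p + \<omega> 2 mod p + \<omega> 3 mod p + \<omega> 4 mod p) mod p,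
        (\<omega> 1 mod p + \<omega> 2 mod p + 2 * (\<omega> 3 mod p) + 2 * (\<omega> 4 mod p)) mod p)) =
      distr P (count_space UNIV) (\<lambda>\<omega>. ((\<omega> 1 mod p + \<omega> 2 mod p + \<omega> 3 mod p + \<omega> 4 mod p) mod p,
        (- ((\<omega> 1 mod p + \<omega> 2 mod p + 2 * (\<omega> 3 mod p) + 2 * (\<omega> 4 mod p)) mod p)) mod p))"
    using p(1) unfolding P_def
    by (intro distr_neg_snd_mod_eq_if_uniform map_pmf_Pi_pmf_four_linear_forms_uniform) (simp_all add: \<mu>_def)
  moreover have "set_pmf (\<mu> i) \<subseteq> Zp p" "\<mu> i \<notin> I_Zp p" for i
    using p ndvd by (simp_all add: \<mu>_def set_pmf_cos_pmf cos_pmf_notin_I_Zp)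
  ultimately show ?thesis
    unfolding Let_def
    by (intro exI[of _ "measure_pmf P"] exI[of _ "\<lambda>i \<omega>. \<omega> i mod p"] exI[of _ \<mu>])
      (auto simp: P_def Zp_def p measure_pmf.prob_space_axioms indep_vars_Pi_pmf_mod distr_Pi_pmf_mod)
qed

end
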